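(* Let $I$ and $J$ be fuzzy implications with $I(1,y)=J(1,y)=y$ for all $y\in[0,1]$ and $J\le I$ pointwise. Let $A$ be an aggregation function having $1$ as a left neutral element ($A(1,x)=x$ for all $x$). If $I$ satisfies (A5) with $A$, then $J$ satisfies (A5) with $A$.
   Context: Aggregation function: $A:[0,1]^2\to[0,1]$ non-decreasing in each variable with $A(0,0)=0$, $A(1,1)=1$. Fuzzy implication: $I:[0,1]^2\to[0,1]$ non-increasing in the first and non-decreasing in the second variable with $I(0,0)=I(1,1)=1$, $I(1,0)=0$. A fuzzy set on a nonempty set $U$ is a map $U\to[0,1]$, normal if it attains $1$. "$I$ satisfies (A5) with $A$" means: for all nonempty sets $U,V$, all normal fuzzy sets $D$ on $U$, $B$ on $V$ and every $y\in V$, $\sup_{x\in U}A(D(x),I(D(x),B(y)))=B(y)$. *)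

theory Defs
  imports Complex_Main
begin

definition unit_int :: "real set" where "unit_int = {0..1}"

definition aggregation :: "(real \<Rightarrow> real \<Rightarrow> real) \<Rightarrow> bool" where
  "aggregation A \<longleftrightarrow>
     (\<forall>x\<in>{0..1}. \<forall>y\<in>{0..1}. A x y \<in> {0..1}) \<and>
     (\<forall>x1\<in>{0..1}. \<forall>x2\<in>{0..1}. \<forall>y\<in>{0..1}. x1 \<le> x2 \<longrightarrow> A x1 y \<le> A x2 y) \<and>
     (\<forall>x\<in>{0..1}. \<forall>y1\<in>{0..1}. \<forall>y2\<in>{0..1}. y1 \<le> y2 \<longrightarrow> A x y1 \<le> A x y2) \<and>
     A 0 0 = 0 \<and> A 1 1 = 1"

definition fuzzy_implication :: "(real \<Rightarrow> real \<Rightarrow> real) \<Rightarrow> bool" where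
  "fuzzy_implication I \<longleftrightarrow>
     (\<forall>x\<in>{0..1}. \<forall>y\<in>{0..1}. I x y \<in> {0..1}) \<and>
     (\<forall>x1\<in>{0..1}. \<forall>x2\<in>{0..1}. \<forall>y\<in>{0..1}. x1 \<le> x2 \<longrightarrow> I x2 y \<le> I x1 y) \<and>
     (\<forall>x\<in>{0..1}. \<forall>y1\<in>{0..1}. \<forall>y2\<in>{0..1}. y1 \<le> y2 \<longrightarrow> I x y1 \<le> I x y2) \<and>
     I 0 0 = 1 \<and> I 1 1 = 1 \<and> I 1 0 = 0"

definition fuzzy_set_on :: "'a set \<Rightarrow> ('a \<Rightarrow> real) \<Rightarrow> bool" where
  "fuzzy_set_on U D \<longleftrightarrow> (\<forall>x\<in>U. D x \<in> {0..1})"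

definition normal_fuzzy_set_on :: "'a set \<Rightarrow> ('a \<Rightarrow> real) \<Rightarrow> bool" where
  "normal_fuzzy_set_on U D \<longleftrightarrow> fuzzy_set_on U D \<and> (\<exists>x\<in>U. D x = 1)"

definition satisfies_A5 ::
  "(real \<Rightarrow> real \<Rightarrow> real) \<Rightarrow> (real \<Rightarrow> real \<Rightarrow> real) \<Rightarrow> 'a itself \<Rightarrow> 'b itself \<Rightarrow> bool" where
  "satisfies_A5 I A _ _ \<longleftrightarrow>
     (\<forall>(U::'a set) (V::'b set) D B. U \<noteq> {} \<longrightarrow> V \<noteq> {} \<longrightarrow>
        normal_fuzzy_set_on U D \<longrightarrow> normal_fuzzy_set_on V B \<longrightarrow>
        (\<forall>y\<in>V. (SUP x\<in>U. A (D x) (I (D x) (B y))) = B y))"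

end

theory Submission
  imports Defs
begin

text \<open>Pointwise, J's terms are dominated by I's, because A is monotone in its second argument; so their
  supremum is at most the supremum for I, which is B y by (A5). At a point where D is 1 the term is
  A 1 (J 1 (B y)) = B y, so this bound is attained.\<close>

lemma cSUP_eq_if_attained_and_dominated:
  fixes f g :: "'a \<Rightarrow> 'b::conditionally_complete_lattice"
  assumes "x0 \<in> U" and "f x0 = c"
    and "\<And>x. x \<in> U \<Longrightarrow> f x \<le> g x"
    and "bdd_above (g ` U)" and "(SUP x\<in>U. g x) = c"
  shows "(SUP x\<in>U. f x) = c"
proof (rule cSup_eq_maximum)
  show "c \<in> f ` U" using assms(1,2) by force
next
  fix z assume "z \<in> f ` U"
  then obtain x where x: "x \<in> U" "z = f x" by blast
  have "f x \<le> g x" using assms(3) x(1) .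
  also have "\<dots> \<le> (SUP x\<in>U. g x)" by (rule cSUP_upper[OF x(1) assms(4)])
  finally show "z \<le> c" using x(2) assms(5) by simp
qed

lemma aggregation_in_unit:
  "aggregation A \<Longrightarrow> x \<in> {0..1} \<Longrightarrow> y \<in> {0..1} \<Longrightarrow> A x y \<in> {0..1}"
  unfolding aggregation_def by blast

lemma aggregation_mono_right:
  "aggregation A \<Longrightarrow> x \<in> {0..1} \<Longrightarrow> y1 \<in> {0..1} \<Longrightarrow> y2 \<in> {0..1} \<Longrightarrow> y1 \<le> y2
    \<Longrightarrow> A x y1 \<le> A x y2"
  unfolding aggregation_def by blast

lemma fuzzy_implication_in_unit:
  "fuzzy_implication I \<Longrightarrow> x \<in> {0..1} \<Longrightarrow> y \<in> {0..1} \<Longrightarrow> I x y \<in> {0..1}"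
  unfolding fuzzy_implication_def by blast

lemma normal_fuzzy_set_onD:
  assumes "normal_fuzzy_set_on U D"
  shows "\<And>x. x \<in> U \<Longrightarrow> D x \<in> {0..1}" and "\<exists>x\<in>U. D x = 1"
  using assms unfolding normal_fuzzy_set_on_def fuzzy_set_on_def by blast+

theorem proposition3p16:
  fixes I J A :: "real \<Rightarrow> real \<Rightarrow> real"
  assumes "fuzzy_implication I" and "fuzzy_implication J"
    and "\<forall>y\<in>{0..1}. I 1 y = y" and "\<forall>y\<in>{0..1}. J 1 y = y"
    and "\<forall>x\<in>{0..1}. \<forall>y\<in>{0..1}. J x y \<le> I x y"
    and "aggregation A" and "\<forall>x\<in>{0..1}. A 1 x = x"
    and "satisfies_A5 I A TYPE('a) TYPE('b)"
  shows "satisfies_A5 J A TYPE('a) TYPE('b)"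
  unfolding satisfies_A5_def
proof (intro allI impI ballI)
  fix U :: "'a set" and V :: "'b set" and D B y
  assume "U \<noteq> {}" "V \<noteq> {}" and D: "normal_fuzzy_set_on U D"
    and B: "normal_fuzzy_set_on V B" and y: "y \<in> V"
  have sup_I: "(SUP x\<in>U. A (D x) (I (D x) (B y))) = B y"
    using assms(8) \<open>U \<noteq> {}\<close> \<open>V \<noteq> {}\<close> D B y unfolding satisfies_A5_def by blast
  have By: "B y \<in> {0..1}" using normal_fuzzy_set_onD(1)[OF B y] .
  obtain x0 where x0: "x0 \<in> U" "D x0 = 1" using normal_fuzzy_set_onD(2)[OF D] by blast
  show "(SUP x\<in>U. A (D x) (J (D x) (B y))) = B y"
  proof (rule cSUP_eq_if_attained_and_dominated[OF x0(1) _ _ _ sup_I])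
    show "A (D x0) (J (D x0) (B y)) = B y" using x0(2) By assms(4,7) by simp
    show "A (D x) (J (D x) (B y)) \<le> A (D x) (I (D x) (B y))" if "x \<in> U" for x
      using normal_fuzzy_set_onD(1)[OF D that] By assms(5)
      by (intro aggregation_mono_right[OF assms(6)] fuzzy_implication_in_unit[OF assms(1)]
          fuzzy_implication_in_unit[OF assms(2)]) auto
    show "bdd_above ((\<lambda>x. A (D x) (I (D x) (B y))) ` U)"
      using normal_fuzzy_set_onD(1)[OF D] By
        aggregation_in_unit[OF assms(6)] fuzzy_implication_in_unit[OF assms(1)]
      by (intro bdd_aboveI[where M=1]) auto
  qed
qed

end
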